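(* Let $e_i\in\mathbb{R}^d$ have strictly positive coordinates and $\xi>0$. Then the budget correspondence $p\mapsto\mathcal B_i(p)$ is $(d^{3/2}/\xi^2)\|e_i\|$-Hausdorff Lipschitz on $\Delta_\xi$, i.e. for all $p_1,p_2\in\Delta_\xi$, $d_H(\mathcal B_i(p_1),\mathcal B_i(p_2))\le\frac{d^{3/2}}{\xi^2}\|e_i\|\,\|p_1-p_2\|$.
   Context: $\Delta_\xi=\{p\in\mathbb{R}^d:p_k>\xi\ \forall k\in[d],\ \sum_{k=1}^d p_k=1\}$; $\mathcal B_i(p)=\{x\in\mathbb{R}^d_+:p\cdot x\le p\cdot e_i\}$ is the budget set of agent $i$ with endowment $e_i$; $d_H$ is the Hausdorff distance with respect to the Euclidean norm $\|\cdot\|$. *)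

theory Defs
  imports "HOL-Analysis.Analysis"
begin

definition hausdorff_dist :: "'a::metric_space set \<Rightarrow> 'a set \<Rightarrow> real" where
  "hausdorff_dist A B = max (SUP a\<in>A. infdist a B) (SUP b\<in>B. infdist b A)"

definition trimmed_simplex :: "real \<Rightarrow> (real ^ 'd) set" where
  "trimmed_simplex \<xi> = {p. (\<forall>k. p $ k > \<xi>) \<and> (\<Sum>k\<in>UNIV. p $ k) = 1}"

definition budget_set :: "real ^ 'd \<Rightarrow> real ^ 'd \<Rightarrow> (real ^ 'd) set" where
  "budget_set e p = {x. (\<forall>k. x $ k \<ge> 0) \<and> p \<bullet> x \<le> p \<bullet> e}"

end

theory Submission
  imports Defs
begin

text \<open>Every point of the budget set has norm at most \<open>\<parallel>e\<parallel>/\<xi>\<close>, since prices on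
  \<open>\<Delta>\<^sub>\<xi>\<close> satisfy \<open>\<xi>\<parallel>x\<parallel> \<le> p\<cdot>x\<close> for \<open>x \<ge> 0\<close>. A point \<open>x\<close> of \<open>\<B>(p\<^sub>1)\<close> lying outside
  \<open>\<B>(p\<^sub>2)\<close> is scaled radially onto the budget hyperplane of \<open>p\<^sub>2\<close>; this moves it by at
  most the budget excess \<open>p\<^sub>2\<cdot>x - p\<^sub>2\<cdot>e\<close> divided by \<open>\<xi>\<close>, and the excess is
  \<open>(p\<^sub>2 - p\<^sub>1)\<cdot>(x - e)\<close> minus a nonnegative slack, hence at most
  \<open>\<parallel>p\<^sub>1 - p\<^sub>2\<parallel>(1/\<xi> + 1)\<parallel>e\<parallel>\<close>. This gives the sharper constant \<open>(1 + \<xi>)/\<xi>\<^sup>2\<close>, which is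
  below \<open>d\<^bsup>3/2\<^esup>/\<xi>\<^sup>2\<close> because \<open>d\<xi> < 1\<close>; for \<open>d = 1\<close> the trimmed simplex has at most one point.\<close>

lemma norm_le_sum_nonneg_cart:
  fixes x :: "real ^ 'd"
  assumes "\<forall>k. x $ k \<ge> 0"
  shows "norm x \<le> (\<Sum>k\<in>UNIV. x $ k)"
  using norm_le_l1_cart[of x] assms by simp

lemma trimmed_simplex_nonneg:
  assumes "p \<in> trimmed_simplex \<xi>" "\<xi> \<ge> 0"
  shows "p $ k \<ge> 0"
  using assms by (auto simp: trimmed_simplex_def intro: less_imp_le order.strict_trans1)

lemma trimmed_simplex_card_mult_less_one:
  assumes "(p :: real ^ 'd) \<in> trimmed_simplex \<xi>"
  shows "real CARD('d) * \<xi> < 1"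
proof -
  have "real CARD('d) * \<xi> = (\<Sum>k\<in>(UNIV :: 'd set). \<xi>)" by simp
  also have "\<dots> < (\<Sum>k\<in>UNIV. p $ k)"
    using assms by (intro sum_strict_mono) (auto simp: trimmed_simplex_def)
  finally show ?thesis using assms by (simp add: trimmed_simplex_def)
qed

lemma trimmed_simplex_card_one_eq:
  assumes "CARD('d) = 1" "p1 \<in> trimmed_simplex \<xi>" "p2 \<in> trimmed_simplex \<xi>"
  shows "p1 = (p2 :: real ^ 'd)"
proof -
  obtain a :: 'd where UNIV_eq: "UNIV = {a}" using assms(1) card_1_singletonE by blast
  have "p1 $ a = 1" "p2 $ a = 1" using assms(2,3) by (auto simp: trimmed_simplex_def UNIV_eq)
  then show ?thesis by (simp add: vec_eq_iff) (metis UNIV_eq UNIV_I singletonD)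
qed

lemma norm_trimmed_simplex_le_one:
  assumes "p \<in> trimmed_simplex \<xi>" "\<xi> \<ge> 0"
  shows "norm p \<le> 1"
  using norm_le_sum_nonneg_cart[of p] trimmed_simplex_nonneg[OF assms] assms(1)
  by (simp add: trimmed_simplex_def)

lemma trimmed_simplex_inner_ge:
  fixes x p :: "real ^ 'd"
  assumes "p \<in> trimmed_simplex \<xi>" "\<xi> \<ge> 0" "\<forall>k. x $ k \<ge> 0"
  shows "\<xi> * norm x \<le> p \<bullet> x"
proof -
  have "\<xi> * norm x \<le> \<xi> * (\<Sum>k\<in>UNIV. x $ k)"
    using norm_le_sum_nonneg_cart[OF assms(3)] assms(2) by (rule mult_left_mono)
  also have "\<dots> = (\<Sum>k\<in>UNIV. \<xi> * x $ k)" by (simp add: sum_distrib_left)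
  also have "\<dots> \<le> (\<Sum>k\<in>UNIV. p $ k * x $ k)"
    using assms(1,3) by (intro sum_mono mult_right_mono) (auto simp: trimmed_simplex_def less_imp_le)
  also have "\<dots> = p \<bullet> x" by (simp add: inner_vec_def)
  finally show ?thesis .
qed

lemma trimmed_simplex_inner_nonneg:
  fixes x p :: "real ^ 'd"
  assumes "p \<in> trimmed_simplex \<xi>" "\<xi> \<ge> 0" "\<forall>k. x $ k \<ge> 0"
  shows "0 \<le> p \<bullet> x"
  using trimmed_simplex_inner_ge[OF assms] assms(2) by (meson mult_nonneg_nonneg norm_ge_zero order_trans)

lemma norm_budget_set_le:
  assumes "x \<in> budget_set e p" "p \<in> trimmed_simplex \<xi>" "\<xi> \<ge> 0"
  shows "\<xi> * norm x \<le> norm e"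
proof -
  have "\<xi> * norm x \<le> p \<bullet> x"
    using assms by (intro trimmed_simplex_inner_ge) (auto simp: budget_set_def)
  also have "\<dots> \<le> p \<bullet> e" using assms(1) by (simp add: budget_set_def)
  also have "\<dots> \<le> norm p * norm e" by (rule norm_cauchy_schwarz)
  also have "\<dots> \<le> norm e"
    using norm_trimmed_simplex_le_one[OF assms(2,3)] by (simp add: mult_left_le_one_le)
  finally show ?thesis .
qed

lemma zero_in_budget_set:
  assumes "0 \<le> p \<bullet> e"
  shows "0 \<in> budget_set e p"
  using assms by (simp add: budget_set_def)

lemma infdist_budget_set_le_excess:
  fixes x e p :: "real ^ 'd"
  assumes "p \<in> trimmed_simplex \<xi>" "\<xi> > 0" "0 \<le> p \<bullet> e" "\<forall>k. x $ k \<ge> 0"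
  shows "infdist x (budget_set e p) \<le> max 0 (p \<bullet> x - p \<bullet> e) / \<xi>"
proof (cases "p \<bullet> x \<le> p \<bullet> e")
  case True
  then show ?thesis using assms(4) by (simp add: budget_set_def)
next
  case False
  define t where "t = (p \<bullet> e) / (p \<bullet> x)"
  have px_pos: "p \<bullet> x > 0" using False assms(3) by linarith
  have t: "0 \<le> t" "t \<le> 1" using False assms(3) px_pos by (auto simp: t_def)
  have "\<forall>k. (t *\<^sub>R x) $ k \<ge> 0" using t(1) assms(4) by simp
  moreover have "p \<bullet> (t *\<^sub>R x) = p \<bullet> e" using px_pos by (simp add: t_def)
  ultimately have "t *\<^sub>R x \<in> budget_set e p" by (simp add: budget_set_def)
  then have "infdist x (budget_set e p) \<le> dist x (t *\<^sub>R x)" by (rule infdist_le)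
  also have "\<dots> = (1 - t) * norm x"
  proof -
    have "x - t *\<^sub>R x = (1 - t) *\<^sub>R x" by (simp add: algebra_simps)
    then show ?thesis using t by (simp add: dist_norm)
  qed
  also have "\<dots> = (p \<bullet> x - p \<bullet> e) * (norm x / (p \<bullet> x))"
    using px_pos by (simp add: t_def field_simps)
  also have "\<dots> \<le> (p \<bullet> x - p \<bullet> e) * (1 / \<xi>)"
    using trimmed_simplex_inner_ge[OF assms(1) _ assms(4)] False px_pos assms(2)
    by (intro mult_left_mono) (simp_all add: field_simps)
  finally show ?thesis using False by (simp add: max_def)
qed

lemma infdist_budget_set_le_price_dist:
  fixes e :: "real ^ 'd"
  assumes e: "\<forall>k. e $ k \<ge> 0" and "\<xi> > 0"
    and p1: "p1 \<in> trimmed_simplex \<xi>" and p2: "p2 \<in> trimmed_simplex \<xi>"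
    and x: "x \<in> budget_set e p1"
  shows "infdist x (budget_set e p2) \<le> (1 + \<xi>) / \<xi>\<^sup>2 * norm e * norm (p1 - p2)"
proof -
  have x_nonneg: "\<forall>k. x $ k \<ge> 0" using x by (simp add: budget_set_def)
  have p2_e: "0 \<le> p2 \<bullet> e"
    using trimmed_simplex_inner_nonneg[OF p2 _ e] \<open>\<xi> > 0\<close> by simp
  have "p2 \<bullet> x - p2 \<bullet> e \<le> (p2 - p1) \<bullet> (x - e)"
    using x by (simp add: budget_set_def inner_diff_left inner_diff_right)
  also have "\<dots> \<le> norm (p1 - p2) * norm (x - e)"
    using norm_cauchy_schwarz by (metis norm_minus_commute)
  also have "\<dots> \<le> norm (p1 - p2) * (norm e / \<xi> + norm e)"
  proof (rule mult_left_mono)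
    have "norm x \<le> norm e / \<xi>"
      using norm_budget_set_le[OF x p1] \<open>\<xi> > 0\<close> by (simp add: field_simps)
    then show "norm (x - e) \<le> norm e / \<xi> + norm e"
      using norm_triangle_ineq4[of x e] by linarith
  qed simp
  finally have excess: "max 0 (p2 \<bullet> x - p2 \<bullet> e) \<le> norm (p1 - p2) * (norm e / \<xi> + norm e)"
    using \<open>\<xi> > 0\<close> by simp
  have "infdist x (budget_set e p2) \<le> max 0 (p2 \<bullet> x - p2 \<bullet> e) / \<xi>"
    using infdist_budget_set_le_excess[OF p2 \<open>\<xi> > 0\<close> p2_e x_nonneg] .
  also have "\<dots> \<le> norm (p1 - p2) * (norm e / \<xi> + norm e) / \<xi>"
    using excess \<open>\<xi> > 0\<close> by (simp add: divide_right_mono)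
  also have "\<dots> = (1 + \<xi>) / \<xi>\<^sup>2 * norm e * norm (p1 - p2)"
    using \<open>\<xi> > 0\<close> by (simp add: field_simps power2_eq_square)
  finally show ?thesis .
qed

lemma hausdorff_dist_le:
  assumes "A \<noteq> {}" "B \<noteq> {}" "\<forall>a\<in>A. infdist a B \<le> c" "\<forall>b\<in>B. infdist b A \<le> c"
  shows "hausdorff_dist A B \<le> c"
  using assms by (simp add: hausdorff_dist_def cSUP_least)

lemma hausdorff_dist_budget_set_le:
  fixes e :: "real ^ 'd"
  assumes "\<forall>k. e $ k \<ge> 0" "\<xi> > 0" "p1 \<in> trimmed_simplex \<xi>" "p2 \<in> trimmed_simplex \<xi>"
  shows "hausdorff_dist (budget_set e p1) (budget_set e p2)
         \<le> (1 + \<xi>) / \<xi>\<^sup>2 * norm e * norm (p1 - p2)"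
proof (rule hausdorff_dist_le)
  have "0 \<in> budget_set e p" if "p \<in> trimmed_simplex \<xi>" for p
    using trimmed_simplex_inner_nonneg[OF that _ assms(1)] assms(2) by (simp add: zero_in_budget_set)
  then show "budget_set e p1 \<noteq> {}" "budget_set e p2 \<noteq> {}" using assms(3,4) by auto
  show "\<forall>x\<in>budget_set e p1. infdist x (budget_set e p2)
          \<le> (1 + \<xi>) / \<xi>\<^sup>2 * norm e * norm (p1 - p2)"
    using infdist_budget_set_le_price_dist[OF assms] by blast
  show "\<forall>x\<in>budget_set e p2. infdist x (budget_set e p1)
          \<le> (1 + \<xi>) / \<xi>\<^sup>2 * norm e * norm (p1 - p2)"
    using infdist_budget_set_le_price_dist[OF assms(1,2,4,3)] by (simp add: norm_minus_commute)
qed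

lemma one_plus_trimming_le_card_powr:
  assumes "CARD('d) \<ge> 2" "(p :: real ^ 'd) \<in> trimmed_simplex \<xi>"
  shows "1 + \<xi> \<le> real CARD('d) powr (3/2)"
proof -
  have "\<xi> < 1"
  proof (cases "\<xi> \<le> 0")
    case False
    then have "\<xi> * 1 \<le> \<xi> * real CARD('d)" using assms(1) by (intro mult_left_mono) auto
    then show ?thesis using trimmed_simplex_card_mult_less_one[OF assms(2)] by (simp add: mult.commute)
  qed simp
  then have "1 + \<xi> \<le> real CARD('d) powr 1" using assms(1) by simp
  also have "\<dots> \<le> real CARD('d) powr (3/2)" using assms(1) by (intro powr_mono) auto
  finally show ?thesis .
qed

theorem mainTheorem18:
  fixes e :: "real ^ 'd" and \<xi> :: real
  assumes "\<forall>k. e $ k > 0"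
    and "\<xi> > 0"
    and "p1 \<in> trimmed_simplex \<xi>" and "p2 \<in> trimmed_simplex \<xi>"
  shows "hausdorff_dist (budget_set e p1) (budget_set e p2)
         \<le> (real CARD('d) powr (3/2) / \<xi>\<^sup>2) * norm e * norm (p1 - p2)"
proof -
  have "hausdorff_dist (budget_set e p1) (budget_set e p2)
        \<le> (1 + \<xi>) / \<xi>\<^sup>2 * norm e * norm (p1 - p2)"
    using assms by (intro hausdorff_dist_budget_set_le) (auto intro: less_imp_le)
  also have "\<dots> \<le> (real CARD('d) powr (3/2) / \<xi>\<^sup>2) * norm e * norm (p1 - p2)"
  proof (cases "CARD('d) = 1")
    case True
    then show ?thesis using trimmed_simplex_card_one_eq[OF True assms(3,4)] by simp
  next
    case False
    then have "CARD('d) \<ge> 2" using zero_less_card_finite[where 'a='d] by linarith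
    then show ?thesis using one_plus_trimming_le_card_powr[OF _ assms(3)]
      by (intro mult_right_mono divide_right_mono) auto
  qed
  finally show ?thesis .
qed

end
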